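(* Let $N\ge 2$ and let $y_i,r_i$ ($1\le i\le N$) be real constants with $0\le|r_1|\le|r_2|\le\dots\le|r_{N-1}|\le r_N$. For integers $j$ let $\bm{x}_j=(|y_1+jr_1|,\dots,|y_N+jr_N|)^T\in\mathbb{R}^N$ and $\tilde{\bm{x}}_j=(|y_1+jr_1|,\dots,|y_{N-1}+jr_{N-1}|)^T\in\mathbb{R}^{N-1}$. Then for all integers $j_1<j_2<\dots<j_N$, \[ \max[\bm{x}_{j_1}\ \bm{x}_{j_2}\ \dots\ \bm{x}_{j_N}]=\max\Bigl(y_N+j_Nr_N+\max[\tilde{\bm{x}}_{j_1}\ \dots\ \tilde{\bm{x}}_{j_{N-1}}],\ -y_N-j_1r_N+\max[\tilde{\bm{x}}_{j_2}\ \dots\ \tilde{\bm{x}}_{j_N}]\Bigr). \]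
   Context: Ultradiscrete permanent (UP): for a real $n\times n$ matrix $A=(a_{ij})$, $\max A\equiv\max_{\pi}\sum_{i=1}^n a_{i\pi(i)}$ over all permutations $\pi$ of $\{1,\dots,n\}$; $\max[\bm{b}_1\ \dots\ \bm{b}_n]$ denotes the UP of the matrix with columns $\bm{b}_1,\dots,\bm{b}_n$. *)

theory Defs
  imports Complex_Main "HOL-Combinatorics.Permutations"
begin

text \<open>Ultradiscrete permanent of the n x n matrix A, rows and columns indexed by 1..n;
  A i k is the entry in row i, column k.\<close>
definition up :: "nat \<Rightarrow> (nat \<Rightarrow> nat \<Rightarrow> real) \<Rightarrow> real" where
  "up n A = Max ((\<lambda>p. \<Sum>i\<in>{1..n}. A i (p i)) ` {p. p permutes {1..n}})"

end

theory Submission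
  imports Defs
begin

text \<open>Write \<open>w k = j\<^sub>k r\<^sub>N\<close>. Every row \<open>i < N\<close> of the matrix is \<open>w\<close>-Lipschitz
  in the column index, since \<open>|r\<^sub>i| \<le> r\<^sub>N\<close>, while the last row is \<open>|y\<^sub>N + w k|\<close>.
  Take an optimal permutation and let \<open>k\<close> be the column of the last row. If
  \<open>y\<^sub>N + w k \<ge> 0\<close>, moving the last row to column \<open>N\<close> (and the row that used column
  \<open>N\<close> to column \<open>k\<close>) gains \<open>w N - w k\<close> in the last row and loses at most as much
  elsewhere; otherwise moving it to column \<open>1\<close> works in the same way. The two
  resulting configurations are exactly the two terms of the maximum.\<close>

lemma up_ge:
  assumes "p permutes {1..n}"
  shows "(\<Sum>i\<in>{1..n}. A i (p i)) \<le> up n A"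
  unfolding up_def
  by (rule Max_ge) (use assms finite_permutations[of "{1..n::nat}"] in auto)

lemma up_attained:
  obtains p where "p permutes {1..n}" "up n A = (\<Sum>i\<in>{1..n}. A i (p i))"
proof -
  let ?S = "(\<lambda>p. \<Sum>i\<in>{1..n}. A i (p i)) ` {p. p permutes {1..n}}"
  have "finite ?S"
    by (simp add: finite_permutations)
  moreover have "?S \<noteq> {}"
    using permutes_id by blast
  ultimately have "up n A \<in> ?S"
    unfolding up_def by (rule Max_in)
  then show thesis
    using that by blast
qed

lemma up_cong:
  assumes "\<And>i k. i \<in> {1..n} \<Longrightarrow> k \<in> {1..n} \<Longrightarrow> A i k = B i k"
  shows "up n A = up n B"
proof -
  have "(\<Sum>i\<in>{1..n}. A i (p i)) = (\<Sum>i\<in>{1..n}. B i (p i))" if "p permutes {1..n}" for p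
    by (rule sum.cong) (use assms permutes_in_image[OF that] in blast)+
  then show ?thesis
    unfolding up_def by (metis (no_types, lifting) image_cong mem_Collect_eq)
qed

lemma up_permute_columns:
  assumes "\<sigma> permutes {1..n}"
  shows "up n (\<lambda>i k. A i (\<sigma> k)) = up n A"
proof -
  have "(\<lambda>p. \<Sum>i\<in>{1..n}. A i (\<sigma> (p i))) ` {p. p permutes {1..n}}
      = (\<lambda>p. \<Sum>i\<in>{1..n}. A i (p i)) ` ((\<circ>) \<sigma> ` {p. p permutes {1..n}})"
    by (simp add: image_image)
  also have "(\<circ>) \<sigma> ` {p. p permutes {1..n}} = {p. p permutes {1..n}}"
    using image_compose_permutations_left[OF assms] by blast
  finally show ?thesis
    unfolding up_def by simp
qed

lemma permutes_Suc_fixing_last: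
  assumes "p permutes {1..Suc n}" "p (Suc n) = Suc n"
  shows "p permutes {1..n}"
  using assms unfolding permutes_def by (metis atLeastAtMost_iff le_Suc_eq)

lemma sum_le_up_fixing_last:
  assumes "p permutes {1..Suc n}" "p (Suc n) = Suc n"
  shows "(\<Sum>i\<in>{1..n}. A i (p i)) \<le> up n A"
  using up_ge[OF permutes_Suc_fixing_last[OF assms]] .

lemma up_Suc_ge_fixing_last:
  "up n A + A (Suc n) (Suc n) \<le> up (Suc n) A"
proof -
  obtain p where p: "p permutes {1..n}" "up n A = (\<Sum>i\<in>{1..n}. A i (p i))"
    using up_attained .
  have "p (Suc n) = Suc n"
    using p(1) by (simp add: permutes_not_in)
  then have "up n A + A (Suc n) (Suc n) = (\<Sum>i\<in>{1..Suc n}. A i (p i))"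
    by (simp add: p(2))
  also have "\<dots> \<le> up (Suc n) A"
    by (rule up_ge) (rule permutes_subset[OF p(1)], auto)
  finally show ?thesis .
qed

text \<open>Rotating the columns turns the last row's column \<open>1\<close> into column \<open>n + 1\<close>, so the
  case where the last row uses the first column reduces to the case where it uses the last.\<close>

definition rotate_columns :: "nat \<Rightarrow> nat \<Rightarrow> nat" where
  "rotate_columns n k = (if k \<in> {1..n} then Suc k else if k = Suc n then 1 else k)"

lemma rotate_columns_permutes: "rotate_columns n permutes {1..Suc n}"
  by (rule inj_imp_permutes) (auto simp: rotate_columns_def inj_on_def)

lemma rotate_columns_last: "rotate_columns n (Suc n) = 1"
  by (simp add: rotate_columns_def)

lemma up_Suc_rotate_columns:
  "up (Suc n) (\<lambda>i k. A i (rotate_columns n k)) = up (Suc n) A"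
  by (rule up_permute_columns[OF rotate_columns_permutes])

lemma up_rotate_columns:
  "up n (\<lambda>i k. A i (rotate_columns n k)) = up n (\<lambda>i k. A i (Suc k))"
  by (rule up_cong) (simp add: rotate_columns_def)

lemma up_Suc_ge_last_to_first:
  "up n (\<lambda>i k. A i (Suc k)) + A (Suc n) 1 \<le> up (Suc n) A"
  using up_Suc_ge_fixing_last[of n "\<lambda>i k. A i (rotate_columns n k)"]
  by (simp add: up_rotate_columns up_Suc_rotate_columns rotate_columns_last)

lemma sum_le_up_last_to_first:
  assumes "p permutes {1..Suc n}" "p (Suc n) = 1"
  shows "(\<Sum>i\<in>{1..n}. A i (p i)) \<le> up n (\<lambda>i k. A i (Suc k))"
proof -
  let ?\<rho> = "rotate_columns n"
  have q: "inv ?\<rho> \<circ> p permutes {1..Suc n}"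
    by (intro permutes_compose assms(1) permutes_inv rotate_columns_permutes)
  have "inv ?\<rho> 1 = Suc n"
    by (simp add: permutes_inv_eq[OF rotate_columns_permutes] rotate_columns_last)
  then have "(inv ?\<rho> \<circ> p) (Suc n) = Suc n"
    by (simp add: assms(2))
  from sum_le_up_fixing_last[OF q this, of "\<lambda>i k. A i (?\<rho> k)"]
  show ?thesis
    by (simp add: up_rotate_columns permutes_inverses(1)[OF rotate_columns_permutes])
qed

lemma sum_permutes_redirect:
  fixes A :: "'a \<Rightarrow> 'a \<Rightarrow> real"
  assumes p: "p permutes S" and S: "finite S" "x \<in> S" "c \<in> S"
    and bound: "\<And>i. i \<in> S - {x} \<Longrightarrow> A i c - A i (p x) \<le> d" and "0 \<le> d"
  obtains q where "q permutes S" "q x = c"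
    "(\<Sum>i\<in>S - {x}. A i (p i)) \<le> (\<Sum>i\<in>S - {x}. A i (q i)) + d"
proof -
  define m where "m = inv p c"
  define q where "q = p \<circ> transpose x m"
  have m: "m \<in> S" "p m = c"
    using S(3) p by (simp_all add: m_def permutes_in_image permutes_inverses permutes_inv)
  have "q permutes S"
    unfolding q_def using S(2) m(1) by (intro permutes_compose p permutes_swap_id)
  moreover have "q x = c"
    using m(2) by (simp add: q_def)
  moreover have "(\<Sum>i\<in>S - {x}. A i (p i)) \<le> (\<Sum>i\<in>S - {x}. A i (q i)) + d"
  proof (cases "m = x")
    case True
    then show ?thesis
      using \<open>0 \<le> d\<close> by (simp add: q_def)
  next
    case False
    let ?R = "S - {x} - {m}"
    have "m \<in> S - {x}"
      using False m(1) by blast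
    then have "(\<Sum>i\<in>S - {x}. A i (p i)) = A m c + (\<Sum>i\<in>?R. A i (p i))"
         "(\<Sum>i\<in>S - {x}. A i (q i)) = A m (p x) + (\<Sum>i\<in>?R. A i (q i))"
      using S(1) m(2) by (simp_all add: sum.remove q_def)
    moreover have "(\<Sum>i\<in>?R. A i (q i)) = (\<Sum>i\<in>?R. A i (p i))"
      by (rule sum.cong) (auto simp: q_def transpose_def)
    ultimately show ?thesis
      using bound[OF \<open>m \<in> S - {x}\<close>] by simp
  qed
  ultimately show thesis
    using that by blast
qed

lemma abs_affine_diff_le:
  fixes y r R b c :: real
  assumes "\<bar>r\<bar> \<le> R" "c \<le> b"
  shows "\<bar>\<bar>y + b * r\<bar> - \<bar>y + c * r\<bar>\<bar> \<le> b * R - c * R"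
proof -
  have "\<bar>\<bar>y + b * r\<bar> - \<bar>y + c * r\<bar>\<bar> \<le> \<bar>(y + b * r) - (y + c * r)\<bar>"
    by (rule abs_triangle_ineq3)
  also have "\<dots> = \<bar>r * (b - c)\<bar>"
    by (simp add: algebra_simps)
  also have "\<dots> = \<bar>r\<bar> * (b - c)"
    using assms(2) by (simp add: abs_mult)
  also have "\<dots> \<le> R * (b - c)"
    using assms by (simp add: mult_right_mono)
  finally show ?thesis
    by (simp add: algebra_simps)
qed

lemma up_Suc_abs_last_row:
  fixes A :: "nat \<Rightarrow> nat \<Rightarrow> real" and w :: "nat \<Rightarrow> real"
  assumes w_mono: "mono_on {1..Suc n} w"
    and rows: "\<And>i k l. i \<in> {1..n} \<Longrightarrow> k \<in> {1..Suc n} \<Longrightarrow> l \<in> {1..Suc n} \<Longrightarrow> k \<le> l \<Longrightarrow>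
      \<bar>A i l - A i k\<bar> \<le> w l - w k"
    and last: "\<And>k. A (Suc n) k = \<bar>u + w k\<bar>"
  shows "up (Suc n) A = max (u + w (Suc n) + up n A) (- u - w 1 + up n (\<lambda>i k. A i (Suc k)))"
proof (rule antisym)
  obtain p where p: "p permutes {1..Suc n}" "up (Suc n) A = (\<Sum>i\<in>{1..Suc n}. A i (p i))"
    using up_attained .
  define k where "k = p (Suc n)"
  have k: "k \<in> {1..Suc n}"
    unfolding k_def using permutes_in_image[OF p(1), of "Suc n"] by simp
  have rows_removed: "{1..Suc n} - {Suc n} = {1..n}"
    by auto
  have split: "up (Suc n) A = (\<Sum>i\<in>{1..n}. A i (p i)) + \<bar>u + w k\<bar>"
    by (simp add: p(2) k_def last)
  show "up (Suc n) A \<le> max (u + w (Suc n) + up n A) (- u - w 1 + up n (\<lambda>i k. A i (Suc k)))"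
  proof (cases "0 \<le> u + w k")
    case True
    have nonneg: "0 \<le> w (Suc n) - w k"
      using k mono_onD[OF w_mono, of k "Suc n"] by simp
    have bound: "A i (Suc n) - A i (p (Suc n)) \<le> w (Suc n) - w k" if "i \<in> {1..Suc n} - {Suc n}" for i
      using that k rows[of i k "Suc n"] by (force simp: k_def)
    obtain q where q: "q permutes {1..Suc n}" "q (Suc n) = Suc n"
      "(\<Sum>i\<in>{1..n}. A i (p i)) \<le> (\<Sum>i\<in>{1..n}. A i (q i)) + (w (Suc n) - w k)"
      using sum_permutes_redirect[where A = A, OF p(1) finite_atLeastAtMost _ _ bound nonneg] k
      unfolding rows_removed by auto
    have "up (Suc n) A \<le> up n A + w (Suc n) - w k + (u + w k)"
      using split q(3) sum_le_up_fixing_last[OF q(1,2), of A] True by simp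
    then show ?thesis
      by simp
  next
    case False
    have nonneg: "0 \<le> w k - w 1"
      using k mono_onD[OF w_mono, of 1 k] by simp
    have bound: "A i 1 - A i (p (Suc n)) \<le> w k - w 1" if "i \<in> {1..Suc n} - {Suc n}" for i
      using that k rows[of i 1 k] by (force simp: k_def)
    obtain q where q: "q permutes {1..Suc n}" "q (Suc n) = 1"
      "(\<Sum>i\<in>{1..n}. A i (p i)) \<le> (\<Sum>i\<in>{1..n}. A i (q i)) + (w k - w 1)"
      using sum_permutes_redirect[where A = A, OF p(1) finite_atLeastAtMost _ _ bound nonneg] k
      unfolding rows_removed by auto
    have "up (Suc n) A \<le> up n (\<lambda>i k. A i (Suc k)) + w k - w 1 - (u + w k)"
      using split q(3) sum_le_up_last_to_first[OF q(1,2), of A] False by simp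
    then show ?thesis
      by simp
  qed
next
  show "max (u + w (Suc n) + up n A) (- u - w 1 + up n (\<lambda>i k. A i (Suc k))) \<le> up (Suc n) A"
    using up_Suc_ge_fixing_last[of n A] up_Suc_ge_last_to_first[of n A] last[of "Suc n"] last[of 1]
    by (simp add: abs_if split: if_splits)
qed

theorem lemma3:
  fixes N :: nat and y r :: "nat \<Rightarrow> real" and j :: "nat \<Rightarrow> int"
  assumes "N \<ge> 2"
    and "\<forall>i. 1 \<le> i \<and> i < N - 1 \<longrightarrow> \<bar>r i\<bar> \<le> \<bar>r (Suc i)\<bar>"
    and "\<bar>r (N - 1)\<bar> \<le> r N"
    and "\<forall>k. 1 \<le> k \<and> k < N \<longrightarrow> j k < j (Suc k)"
  shows "up N (\<lambda>i k. \<bar>y i + of_int (j k) * r i\<bar>) =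
    max (y N + of_int (j N) * r N + up (N - 1) (\<lambda>i k. \<bar>y i + of_int (j k) * r i\<bar>))
        (- y N - of_int (j 1) * r N + up (N - 1) (\<lambda>i k. \<bar>y i + of_int (j (Suc k)) * r i\<bar>))"
proof -
  define n where "n = N - 1"
  have N: "N = Suc n"
    using assms(1) by (simp add: n_def)
  have j_mono: "j k \<le> j l" if "k \<in> {1..N}" "l \<in> {1..N}" "k \<le> l" for k l
    using lift_Suc_mono_le_ivl[of "{1..<N}" j k l] assms(4) that by fastforce
  have r_le: "\<bar>r i\<bar> \<le> r N" if "i \<in> {1..n}" for i
    using lift_Suc_mono_le_ivl[of "{1..<n}" "\<lambda>i. \<bar>r i\<bar>" i n] assms(2,3) that
    by (fastforce simp: n_def)
  have w_mono: "mono_on {1..N} (\<lambda>k. of_int (j k) * r N)"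
    using j_mono assms(3) by (intro mono_onI mult_right_mono) auto
  have rows: "\<bar>\<bar>y i + of_int (j l) * r i\<bar> - \<bar>y i + of_int (j k) * r i\<bar>\<bar>
      \<le> of_int (j l) * r N - of_int (j k) * r N"
    if "i \<in> {1..n}" "k \<in> {1..N}" "l \<in> {1..N}" "k \<le> l" for i k l
    using r_le[OF that(1)] j_mono[OF that(2-4)] by (intro abs_affine_diff_le) simp_all
  show ?thesis
    using up_Suc_abs_last_row[of n "\<lambda>k. of_int (j k) * r N" "\<lambda>i k. \<bar>y i + of_int (j k) * r i\<bar>" "y N"]
      w_mono rows
    unfolding N[symmetric] n_def[symmetric] by (simp add: algebra_simps)
qed

end
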